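(* For every prime $p\ge 3$ we have $n(\mathbb{Z}_p) \le \frac{3p-1}{2}$.
   Context: For an integer $n\ge 1$, $\overleftrightarrow{K}_n$ denotes the complete digraph on $n$ vertices whose arc set consists of all ordered pairs $(x,y)$ of distinct vertices. For a set $A$, an $A$-arc-labelling of $\overleftrightarrow{K}_n$ is a function $w$ from the arc set of $\overleftrightarrow{K}_n$ to $A$. If $(A,+)$ is an Abelian group, $w$ is called zero-sum-free if there is no directed cycle (including directed cycles of length two) for which the sum of the arc-labels is $0$. For a non-trivial finite Abelian group $A$, $n(A)\ge 2$ is the smallest integer such that $\overleftrightarrow{K}_{n(A)}$ has no zero-sum-free $A$-arc-labelling. $\mathbb{Z}_p$ denotes the cyclic group of order $p$. *)

theory Defs
  imports "HOL-Computational_Algebra.Primes"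
begin

text \<open>Vertices of the complete digraph K_n are 0..n-1; arcs are all pairs (x,y), x \<noteq> y.
  A Z_p-arc-labelling is represented by an integer-valued function on arcs, labels read mod p.
  A directed cycle (length \<ge> 2) is a list of distinct vertices vs, with arcs
  vs!i -> vs!((i+1) mod length vs).\<close>

definition zero_sum_free_Zp :: "nat \<Rightarrow> nat \<Rightarrow> (nat \<Rightarrow> nat \<Rightarrow> int) \<Rightarrow> bool" where
  "zero_sum_free_Zp p n w \<longleftrightarrow>
     (\<forall>vs. distinct vs \<and> 2 \<le> length vs \<and> set vs \<subseteq> {..<n} \<longrightarrow>
        \<not> (int p dvd (\<Sum>i<length vs. w (vs ! i) (vs ! ((i + 1) mod length vs)))))"

definition n_Zp :: "nat \<Rightarrow> nat" where
  "n_Zp p = (LEAST n. 2 \<le> n \<and> \<not> (\<exists>w. zero_sum_free_Zp p n w))"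

end

theory Submission
  imports Defs "HOL-Number_Theory.Cong"
begin

text \<open>Write p = 2K + 1 and suppose w is zero-sum-free on 1 + 3K vertices. Grow simple paths
  from vertex 0, adding three fresh vertices per round. For three fresh vertices, after shifting
  the labels by a potential, some vertex e can be reached from the current endpoint through the
  other two with at least three distinct residues; by Cauchy-Davenport the set of residues of
  paths from 0 to the endpoint then grows by at least two per round. After K rounds every residue
  is realised by a path from 0 to some x \<noteq> 0, in particular -w(x,0), and closing that path
  by the arc (x,0) gives a zero-sum cycle.\<close>

section \<open>The Cauchy-Davenport theorem\<close>

definition sumset_mod :: "int \<Rightarrow> int set \<Rightarrow> int set \<Rightarrow> int set" where
  "sumset_mod P A B = {(a + b) mod P | a b. a \<in> A \<and> b \<in> B}"

lemma sumset_mod_subset: "P > 0 \<Longrightarrow> sumset_mod P A B \<subseteq> {0..<P}"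
  unfolding sumset_mod_def by auto

lemma sumset_mod_mono: "A' \<subseteq> A \<Longrightarrow> B' \<subseteq> B \<Longrightarrow> sumset_mod P A' B' \<subseteq> sumset_mod P A B"
  unfolding sumset_mod_def by blast

lemma residues_eq_if_card_ge:
  fixes P :: int
  assumes "A \<subseteq> {0..<P}" and "P \<le> int (card A)"
  shows "A = {0..<P}"
proof -
  have "card A \<le> card {0..<P}"
    using assms(1) by (intro card_mono) auto
  then have "card A = card {0..<P}"
    using assms(2) by simp
  then show ?thesis
    using assms(1) by (intro card_subset_eq) auto
qed

lemma inj_on_add_mod:
  fixes P :: int
  assumes "A \<subseteq> {0..<P}"
  shows "inj_on (\<lambda>a. (a + c) mod P) A"
proof
  fix a1 a2 assume "a1 \<in> A" "a2 \<in> A" and "(a1 + c) mod P = (a2 + c) mod P"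
  then have "a1 mod P = a2 mod P"
    by (simp add: mod_eq_dvd_iff)
  moreover have "a1 mod P = a1" "a2 mod P = a2"
    using assms \<open>a1 \<in> A\<close> \<open>a2 \<in> A\<close> by auto
  ultimately show "a1 = a2"
    by simp
qed

lemma card_sumset_mod_singleton:
  assumes "A \<subseteq> {0..<P}"
  shows "card (sumset_mod P A {b}) = card A"
proof -
  have "sumset_mod P A {b} = (\<lambda>a. (a + b) mod P) ` A"
    unfolding sumset_mod_def by auto
  then show ?thesis
    using card_image[OF inj_on_add_mod[OF assms]] by simp
qed

lemma sumset_mod_all_residues:
  assumes "B \<noteq> {}"
  shows "sumset_mod P {0..<P} B = {0..<P}"
proof
  show "sumset_mod P {0..<P} B \<subseteq> {0..<P}"
    unfolding sumset_mod_def by auto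
  obtain b where "b \<in> B"
    using assms by blast
  show "{0..<P} \<subseteq> sumset_mod P {0..<P} B"
  proof
    fix r assume r: "r \<in> {0..<P}"
    then have "r = ((r - b) mod P + b) mod P"
      by (simp add: mod_add_left_eq)
    moreover have "(r - b) mod P \<in> {0..<P}"
      using r by simp
    ultimately show "r \<in> sumset_mod P {0..<P} B"
      unfolding sumset_mod_def using \<open>b \<in> B\<close> by blast
  qed
qed

lemma translation_invariant_residues_eq:
  fixes P :: int
  assumes A: "A \<subseteq> {0..<P}" and "a0 \<in> A" and "coprime c P"
    and closed: "\<And>a. a \<in> A \<Longrightarrow> (a + c) mod P \<in> A"
  shows "A = {0..<P}"
proof
  show "A \<subseteq> {0..<P}" by fact
  have orbit: "(a0 + int n * c) mod P \<in> A" for n :: nat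
  proof (induction n)
    case 0
    show ?case
      using A \<open>a0 \<in> A\<close> by auto
  next
    case (Suc n)
    have "(a0 + int (Suc n) * c) mod P = ((a0 + int n * c) + c) mod P"
      by (simp add: algebra_simps)
    also have "\<dots> = ((a0 + int n * c) mod P + c) mod P"
      by (simp add: mod_add_left_eq)
    also have "\<dots> \<in> A"
      using closed[OF Suc] .
    finally show ?case .
  qed
  obtain u where u: "[c * u = 1] (mod P)"
    using cong_solve_coprime_int \<open>coprime c P\<close> by blast
  show "{0..<P} \<subseteq> A"
  proof
    fix r assume r: "r \<in> {0..<P}"
    define n where "n = nat (((r - a0) * u) mod P)"
    have "[a0 + int n * c = a0 + ((r - a0) * u) * c] (mod P)"
      using r by (intro cong_add cong_refl cong_mult) (simp add: n_def cong_def)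
    also have "a0 + ((r - a0) * u) * c = a0 + (r - a0) * (c * u)"
      by (simp add: algebra_simps)
    also have "[a0 + (r - a0) * (c * u) = a0 + (r - a0) * 1] (mod P)"
      by (intro cong_add cong_refl cong_mult u)
    finally have "(a0 + int n * c) mod P = r"
      using r by (simp add: cong_def)
    then show "r \<in> A"
      using orbit[of n] by simp
  qed
qed

lemma coprime_diff_residues:
  fixes P :: int
  assumes "prime P" "x \<in> {0..<P}" "y \<in> {0..<P}" "x \<noteq> y"
  shows "coprime (x - y) P"
proof -
  have "\<not> P dvd (x - y)"
  proof
    assume "P dvd (x - y)"
    then have "x mod P = y mod P"
      by (simp add: mod_eq_dvd_iff)
    then show False
      using assms(2-4) by simp
  qed
  then show ?thesis
    using assms(1) prime_imp_coprime coprime_commute by blast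
qed

lemma cauchy_davenport_shift_closed:
  fixes P :: int
  assumes "prime P" "A \<subseteq> {0..<P}" "B \<subseteq> {0..<P}" "A \<noteq> {}" "b0 \<in> B"
    and closed: "\<forall>a\<in>A. \<forall>b\<in>B. (a + b - b0) mod P \<in> A"
  shows "min P (int (card A) + int (card B) - 1) \<le> int (card (sumset_mod P A B))"
proof (cases "B = {b0}")
  case True
  then show ?thesis
    using card_sumset_mod_singleton[OF assms(2)] by simp
next
  case False
  then obtain b1 where "b1 \<in> B" "b1 \<noteq> b0"
    using assms(5) by blast
  then have "coprime (b1 - b0) P"
    using coprime_diff_residues assms(1,3,5) by blast
  moreover obtain a0 where "a0 \<in> A"
    using assms(4) by blast
  moreover have "(a + (b1 - b0)) mod P \<in> A" if "a \<in> A" for a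
    using closed that \<open>b1 \<in> B\<close> by (simp add: algebra_simps)
  ultimately have "A = {0..<P}"
    using translation_invariant_residues_eq assms(2) by blast
  moreover have "P > 0" "B \<noteq> {}"
    using assms(1,5) prime_gt_0_int by blast+
  ultimately show ?thesis
    using sumset_mod_all_residues[of B P] by simp
qed

lemma sumset_mod_davenport_subset:
  "sumset_mod P (A \<union> (\<lambda>y. (y + c) mod P) ` B) {y \<in> B. (y + c) mod P \<in> A} \<subseteq> sumset_mod P A B"
proof
  fix s assume "s \<in> sumset_mod P (A \<union> (\<lambda>y. (y + c) mod P) ` B) {y \<in> B. (y + c) mod P \<in> A}"
  then obtain x y where s: "s = (x + y) mod P" and x: "x \<in> A \<union> (\<lambda>y. (y + c) mod P) ` B"
    and y: "y \<in> B" "(y + c) mod P \<in> A"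
    unfolding sumset_mod_def by blast
  from x show "s \<in> sumset_mod P A B"
  proof
    assume "x \<in> A"
    then show ?thesis
      using s y unfolding sumset_mod_def by blast
  next
    assume "x \<in> (\<lambda>y. (y + c) mod P) ` B"
    then obtain z where "z \<in> B" "x = (z + c) mod P"
      by blast
    then have "s = ((y + c) mod P + z) mod P"
      unfolding s by (simp add: mod_simps algebra_simps)
    then show ?thesis
      using y \<open>z \<in> B\<close> unfolding sumset_mod_def by blast
  qed
qed

lemma davenport_transform:
  assumes A: "A \<subseteq> {0..<P}" and B: "B \<subseteq> {0..<P}"
    and "b0 \<in> B" "a \<in> A" "b \<in> B" and escape: "(a + b - b0) mod P \<notin> A"
  obtains A' B' where "A' \<subseteq> {0..<P}" "A \<subseteq> A'" "b0 \<in> B'" "B' \<subset> B"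
    "card A' + card B' = card A + card B" "sumset_mod P A' B' \<subseteq> sumset_mod P A B"
proof -
  define shift where "shift y = (y + (a - b0)) mod P" for y
  define B' where "B' = {y \<in> B. shift y \<in> A}"
  define A' where "A' = A \<union> shift ` (B - B')"
  have "P > 0"
    using B \<open>b0 \<in> B\<close> by auto
  have fin: "finite A" "finite B"
    using A B finite_subset by auto
  have "b0 \<in> B'"
    using A \<open>a \<in> A\<close> \<open>b0 \<in> B\<close> unfolding B'_def shift_def by auto
  moreover have "B' \<subset> B"
    using \<open>b \<in> B\<close> escape unfolding B'_def shift_def by (auto simp: algebra_simps)
  moreover have "A' \<subseteq> {0..<P}"
    unfolding A'_def shift_def using A \<open>P > 0\<close> by auto
  moreover have "card A' = card A + card (B - B')"
  proof -
    have "A \<inter> shift ` (B - B') = {}"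
      unfolding B'_def by auto
    moreover have "card (shift ` (B - B')) = card (B - B')"
      unfolding shift_def using B by (intro card_image inj_on_add_mod) auto
    ultimately show ?thesis
      unfolding A'_def using fin by (simp add: card_Un_disjoint)
  qed
  moreover have "card B = card B' + card (B - B')"
    using fin \<open>B' \<subset> B\<close> by (metis card_Diff_subset card_mono finite_subset
        le_add_diff_inverse psubset_imp_subset)
  moreover have "sumset_mod P A' B' \<subseteq> sumset_mod P A B"
  proof -
    have "sumset_mod P A' B' \<subseteq> sumset_mod P (A \<union> shift ` B) B'"
      unfolding A'_def by (rule sumset_mod_mono) auto
    also have "\<dots> \<subseteq> sumset_mod P A B"
      unfolding B'_def shift_def by (rule sumset_mod_davenport_subset)
    finally show ?thesis .
  qed
  ultimately show ?thesis
    using that[of A' B'] unfolding A'_def by auto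
qed

theorem cauchy_davenport:
  fixes P :: int
  assumes "prime P" "A \<subseteq> {0..<P}" "B \<subseteq> {0..<P}" "A \<noteq> {}" "B \<noteq> {}"
  shows "min P (int (card A) + int (card B) - 1) \<le> int (card (sumset_mod P A B))"
  using assms(2-)
proof (induction "card B" arbitrary: A B rule: less_induct)
  case less
  have "P > 0"
    using assms(1) prime_gt_0_int by blast
  have fin_sums: "finite (sumset_mod P A' B')" for A' B'
    using sumset_mod_subset[OF \<open>P > 0\<close>] finite_subset by blast
  obtain b0 where b0: "b0 \<in> B"
    using less.prems by blast
  show ?case
  proof (cases "\<forall>a\<in>A. \<forall>b\<in>B. (a + b - b0) mod P \<in> A")
    case True
    then show ?thesis
      by (rule cauchy_davenport_shift_closed[OF assms(1) less.prems(1,2,3) b0])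
  next
    case False
    then obtain a b where "a \<in> A" "b \<in> B" "(a + b - b0) mod P \<notin> A"
      by blast
    then obtain A' B' where A': "A' \<subseteq> {0..<P}" "A \<subseteq> A'" and B': "b0 \<in> B'" "B' \<subset> B"
      and card_eq: "card A' + card B' = card A + card B"
      and sums: "sumset_mod P A' B' \<subseteq> sumset_mod P A B"
      using davenport_transform[OF less.prems(1,2) b0] by blast
    have "card B' < card B"
      using B'(2) less.prems(2) finite_subset by (blast intro: psubset_card_mono)
    moreover have "B' \<subseteq> {0..<P}" "A' \<noteq> {}" "B' \<noteq> {}"
      using A' B' less.prems by auto
    ultimately have "min P (int (card A') + int (card B') - 1) \<le> int (card (sumset_mod P A' B'))"
      using less.hyps A'(1) by blast
    also have "card (sumset_mod P A' B') \<le> card (sumset_mod P A B)"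
      using sums fin_sums by (rule card_mono[rotated])
    finally show ?thesis
      using card_eq by simp
  qed
qed

section \<open>Weights of paths and cycles\<close>

fun path_weight :: "('v \<Rightarrow> 'v \<Rightarrow> 'a::comm_monoid_add) \<Rightarrow> 'v list \<Rightarrow> 'a" where
  "path_weight w (u # v # vs) = w u v + path_weight w (v # vs)"
| "path_weight w _ = 0"

lemma path_weight_Cons: "vs \<noteq> [] \<Longrightarrow> path_weight w (u # vs) = w u (hd vs) + path_weight w vs"
  by (cases vs) auto

lemma path_weight_append:
  "xs \<noteq> [] \<Longrightarrow> ys \<noteq> [] \<Longrightarrow>
    path_weight w (xs @ ys) = path_weight w xs + w (last xs) (hd ys) + path_weight w ys"
  by (induction w xs rule: path_weight.induct) (auto simp: path_weight_Cons add_ac)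

lemma path_weight_potential_shift:
  fixes w :: "'v \<Rightarrow> 'v \<Rightarrow> 'a::ab_group_add"
  shows "vs \<noteq> [] \<Longrightarrow>
    path_weight (\<lambda>u v. w u v + f u - f v) vs = path_weight w vs + f (hd vs) - f (last vs)"
  by (induction w vs rule: path_weight.induct) (auto simp: algebra_simps)

lemma path_weight_conv_sum: "path_weight w vs = (\<Sum>i<length vs - 1. w (vs ! i) (vs ! Suc i))"
  by (induction w vs rule: path_weight.induct)
    (simp_all del: sum.lessThan_Suc add: sum.lessThan_Suc_shift)

lemma cycle_weight_conv_path_weight:
  assumes "vs \<noteq> []"
  shows "(\<Sum>i<length vs. w (vs ! i) (vs ! ((i + 1) mod length vs)))
    = path_weight w vs + w (last vs) (hd vs)"
proof -
  obtain m where len: "length vs = Suc m"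
    using assms by (cases vs) auto
  have "(\<Sum>i<length vs. w (vs ! i) (vs ! ((i + 1) mod length vs)))
      = (\<Sum>i<m. w (vs ! i) (vs ! Suc i)) + w (vs ! m) (vs ! 0)"
    unfolding len by simp
  also have "\<dots> = path_weight w vs + w (last vs) (hd vs)"
    using assms len by (simp add: path_weight_conv_sum last_conv_nth hd_conv_nth)
  finally show ?thesis .
qed

lemma zero_sum_free_cycle:
  assumes "zero_sum_free_Zp p n w" "distinct vs" "2 \<le> length vs" "set vs \<subseteq> {..<n}"
  shows "\<not> int p dvd (path_weight w vs + w (last vs) (hd vs))"
proof -
  have "vs \<noteq> []"
    using assms(3) by auto
  moreover have "\<not> int p dvd (\<Sum>i<length vs. w (vs ! i) (vs ! ((i + 1) mod length vs)))"
    using assms unfolding zero_sum_free_Zp_def by blast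
  ultimately show ?thesis
    using cycle_weight_conv_path_weight[of vs w] by simp
qed

lemma zero_sum_free_two_cycle:
  assumes "zero_sum_free_Zp p n w" "a \<noteq> b" "a < n" "b < n"
  shows "\<not> int p dvd (w a b + w b a)"
  using zero_sum_free_cycle[OF assms(1), of "[a, b]"] assms by simp

definition simple_path :: "'v set \<Rightarrow> 'v \<Rightarrow> 'v \<Rightarrow> 'v list \<Rightarrow> bool" where
  "simple_path W u v vs \<longleftrightarrow> vs \<noteq> [] \<and> hd vs = u \<and> last vs = v \<and> distinct vs \<and> set vs \<subseteq> W"

definition path_residues :: "int \<Rightarrow> ('v \<Rightarrow> 'v \<Rightarrow> int) \<Rightarrow> 'v set \<Rightarrow> 'v \<Rightarrow> 'v \<Rightarrow> int set" where
  "path_residues P w W u v = {path_weight w vs mod P | vs. simple_path W u v vs}"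

lemma path_residues_subset: "P > 0 \<Longrightarrow> path_residues P w W u v \<subseteq> {0..<P}"
  unfolding path_residues_def by auto

lemma path_residues_concat:
  assumes "W \<inter> V = {}"
  shows "sumset_mod P (path_residues P w W u x)
           {path_weight w (x # s) mod P | s. simple_path V (hd s) v s}
         \<subseteq> path_residues P w (W \<union> V) u v"
proof
  fix t assume "t \<in> sumset_mod P (path_residues P w W u x)
                      {path_weight w (x # s) mod P | s. simple_path V (hd s) v s}"
  then obtain vs s where vs: "simple_path W u x vs" and s: "simple_path V (hd s) v s"
    and t: "t = (path_weight w vs mod P + path_weight w (x # s) mod P) mod P"
    unfolding sumset_mod_def path_residues_def by blast
  have "simple_path (W \<union> V) u v (vs @ s)"
    using vs s assms unfolding simple_path_def by auto
  moreover have "t = path_weight w (vs @ s) mod P"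
    using vs s unfolding t
    by (simp add: simple_path_def path_weight_append path_weight_Cons mod_add_eq add.assoc)
  ultimately show "t \<in> path_residues P w (W \<union> V) u v"
    unfolding path_residues_def by blast
qed

lemma closing_residue_notin_path_residues:
  assumes "zero_sum_free_Zp p n w" "u \<noteq> x"
  shows "(- w x u) mod int p \<notin> path_residues (int p) w {..<n} u x"
proof
  assume "(- w x u) mod int p \<in> path_residues (int p) w {..<n} u x"
  then obtain vs where vs: "simple_path {..<n} u x vs"
    and "path_weight w vs mod int p = (- w x u) mod int p"
    unfolding path_residues_def by auto
  then have "int p dvd (path_weight w vs + w (last vs) (hd vs))"
    by (simp add: simple_path_def mod_eq_dvd_iff)
  moreover have "2 \<le> length vs"
    using vs assms(2) by (cases vs rule: remdups_adj.cases) (auto simp: simple_path_def)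
  ultimately show False
    using zero_sum_free_cycle[OF assms(1)] vs unfolding simple_path_def by blast
qed

section \<open>Three fresh vertices\<close>

definition has_three_classes :: "int \<Rightarrow> int set \<Rightarrow> bool" where
  "has_three_classes P S \<longleftrightarrow>
     (\<exists>u\<in>S. \<exists>v\<in>S. \<exists>s\<in>S. \<not> P dvd (u - v) \<and> \<not> P dvd (v - s) \<and> \<not> P dvd (u - s))"

definition arrival_weights :: "('v \<Rightarrow> 'v \<Rightarrow> int) \<Rightarrow> 'v \<Rightarrow> 'v \<Rightarrow> 'v \<Rightarrow> int set" where
  "arrival_weights d e a b = path_weight d ` {[e], [a, e], [b, e], [a, b, e], [b, a, e]}"

lemma arrival_weights_eq:
  "arrival_weights d e a b = {0, d a e, d b e, d a b + d b e, d b a + d a e}"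
  unfolding arrival_weights_def by simp

lemma arrival_weights_swap: "arrival_weights d e a b = arrival_weights d e b a"
  unfolding arrival_weights_def by (simp add: insert_commute)

lemma not_three_classes_dvd:
  assumes "\<not> has_three_classes P S" "0 \<in> S" "u \<in> S" "v \<in> S"
  shows "P dvd u \<or> P dvd v \<or> P dvd (u - v)"
  using assms unfolding has_three_classes_def by force

lemma odd_dvd_double_iff:
  fixes P :: int
  shows "odd P \<Longrightarrow> P dvd 2 * t \<longleftrightarrow> P dvd t"
  by (simp add: coprime_dvd_mult_right_iff)

lemma two_arc_path_dvd:
  assumes "\<not> has_three_classes P (arrival_weights d e a b)" "\<not> P dvd d a b" "\<not> P dvd d b e"
  shows "P dvd (d a b + d b e)"
  using not_three_classes_dvd[OF assms(1), of "d b e" "d a b + d b e"] assms(2,3)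
  by (simp add: arrival_weights_eq)

lemma nonzero_triangle_three_classes:
  fixes P :: int
  assumes "odd P" "\<not> P dvd d y z" "\<not> P dvd d z q" "\<not> P dvd d q y"
  shows "has_three_classes P (arrival_weights d q y z)
    \<or> has_three_classes P (arrival_weights d y z q)
    \<or> has_three_classes P (arrival_weights d z q y)"
proof (rule ccontr)
  assume "\<not> ?thesis"
  then have bad: "\<not> has_three_classes P (arrival_weights d q y z)"
    "\<not> has_three_classes P (arrival_weights d y z q)"
    "\<not> has_three_classes P (arrival_weights d z q y)"
    by auto
  have "P dvd ((d y z + d z q) - (d z q + d q y) + (d q y + d y z))"
    using two_arc_path_dvd[OF bad(1) assms(2,3)] two_arc_path_dvd[OF bad(2) assms(3,4)]
      two_arc_path_dvd[OF bad(3) assms(4,2)] by (intro dvd_add[OF dvd_diff])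
  then have "P dvd 2 * d y z"
    by (simp add: algebra_simps)
  then show False
    using assms(1,2) odd_dvd_double_iff by blast
qed

lemma congruent_in_arcs_path_nonzero:
  fixes P :: int
  assumes "odd P" "\<not> P dvd (d a e + d e a)" "\<not> P dvd d b e" "P dvd (d a e - d b e)"
    and bad_a: "\<not> has_three_classes P (arrival_weights d a e b)"
  shows "\<not> P dvd (d b a + d a e)"
proof
  assume zero: "P dvd (d b a + d a e)"
  have "\<not> P dvd d a e"
  proof
    assume "P dvd d a e"
    then have "P dvd (d a e - (d a e - d b e))"
      using assms(4) by (rule dvd_diff)
    then show False
      using assms(3) by simp
  qed
  have "\<not> P dvd d b a"
  proof
    assume "P dvd d b a"
    with zero have "P dvd (d b a + d a e - d b a)"
      by (rule dvd_diff)
    then show False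
      using \<open>\<not> P dvd d a e\<close> by simp
  qed
  have "P dvd d e a"
  proof (rule ccontr)
    assume "\<not> P dvd d e a"
    then have "P dvd (d b a - d e a)"
      using not_three_classes_dvd[OF bad_a, of "d b a" "d e a"] \<open>\<not> P dvd d b a\<close>
      by (simp add: arrival_weights_eq)
    then have "P dvd ((d b a + d a e) - (d b a - d e a))"
      by (rule dvd_diff[OF zero])
    then show False
      using assms(2) by (simp add: algebra_simps)
  qed
  have "\<not> P dvd (d b e + d e a)"
    using \<open>P dvd d e a\<close> assms(3) by (simp add: dvd_add_left_iff)
  then have "P dvd (d b a - (d b e + d e a))"
    using not_three_classes_dvd[OF bad_a, of "d b a" "d b e + d e a"] \<open>\<not> P dvd d b a\<close>
    by (simp add: arrival_weights_eq)
  then have "P dvd ((d b a + d a e) - (d b a - (d b e + d e a)) - d e a + (d a e - d b e))"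
    using zero \<open>P dvd d e a\<close> assms(4) by (intro dvd_add[OF dvd_diff[OF dvd_diff]])
  then have "P dvd 2 * d a e"
    by (simp add: algebra_simps)
  then show False
    using assms(1) \<open>\<not> P dvd d a e\<close> odd_dvd_double_iff by blast
qed

lemma zero_in_arc:
  fixes P :: int
  assumes "odd P"
    and "\<not> P dvd (d a b + d b a)" "\<not> P dvd (d a e + d e a)" "\<not> P dvd (d b e + d e b)"
    and bad_e: "\<not> has_three_classes P (arrival_weights d e a b)"
    and bad_a: "\<not> has_three_classes P (arrival_weights d a e b)"
    and bad_b: "\<not> has_three_classes P (arrival_weights d b e a)"
  shows "P dvd d a e \<or> P dvd d b e"
proof (rule ccontr)
  assume "\<not> ?thesis"
  then have nae: "\<not> P dvd d a e" and nbe: "\<not> P dvd d b e"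
    by auto
  have "P dvd (d a e - d b e)"
    using not_three_classes_dvd[OF bad_e, of "d a e" "d b e"] nae nbe
    by (simp add: arrival_weights_eq)
  then have "P dvd (d b e - d a e)"
    by (simp add: dvd_diff_commute)
  have "\<not> P dvd (d b a + d a e)"
    using congruent_in_arcs_path_nonzero[OF assms(1,3) nbe \<open>P dvd (d a e - d b e)\<close> bad_a] .
  moreover have "\<not> P dvd (d a b + d b e)"
    using congruent_in_arcs_path_nonzero[OF assms(1,4) nae \<open>P dvd (d b e - d a e)\<close> bad_b] .
  ultimately have "P dvd d b a" "P dvd d a b"
    using not_three_classes_dvd[OF bad_e, of "d a e" "d b a + d a e"]
      not_three_classes_dvd[OF bad_e, of "d b e" "d a b + d b e"] nae nbe
    by (simp_all add: arrival_weights_eq)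
  then show False
    using assms(2) by (simp add: dvd_add)
qed

lemma three_classes_vertex:
  fixes P :: int
  assumes "odd P"
    and yz: "\<not> P dvd (d y z + d z y)" and yq: "\<not> P dvd (d y q + d q y)"
    and zq: "\<not> P dvd (d z q + d q z)"
  shows "has_three_classes P (arrival_weights d q y z)
    \<or> has_three_classes P (arrival_weights d y z q)
    \<or> has_three_classes P (arrival_weights d z y q)"
proof (rule ccontr)
  assume "\<not> ?thesis"
  then have bad: "\<not> has_three_classes P (arrival_weights d q y z)"
    "\<not> has_three_classes P (arrival_weights d q z y)"
    "\<not> has_three_classes P (arrival_weights d y z q)"
    "\<not> has_three_classes P (arrival_weights d y q z)"
    "\<not> has_three_classes P (arrival_weights d z y q)"
    "\<not> has_three_classes P (arrival_weights d z q y)"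
    by (simp_all add: arrival_weights_swap[of d q z y] arrival_weights_swap[of d y q z]
        arrival_weights_swap[of d z q y])
  have zy: "\<not> P dvd (d z y + d y z)" and qy: "\<not> P dvd (d q y + d y q)"
    and qz: "\<not> P dvd (d q z + d z q)"
    using yz yq zq by (simp_all add: add.commute)
  have "P dvd d z y \<or> P dvd d q y"
    using zero_in_arc[OF assms(1) zq zy qy bad(3) bad(5) bad(1)] .
  moreover have "P dvd d y z \<or> P dvd d q z"
    using zero_in_arc[OF assms(1) yq yz qz bad(5) bad(3) bad(2)] .
  moreover have "P dvd d y q \<or> P dvd d z q"
    using zero_in_arc[OF assms(1) yz yq zq bad(1) bad(4) bad(6)] .
  moreover have "\<not> (P dvd d y z \<and> P dvd d z y)" "\<not> (P dvd d y q \<and> P dvd d q y)"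
    "\<not> (P dvd d z q \<and> P dvd d q z)"
    using yz yq zq by (auto simp: dvd_add)
  \<comment> \<open>with no antiparallel pair among them, the three zero in-arcs form a directed triangle\<close>
  ultimately have "(\<not> P dvd d y z \<and> \<not> P dvd d z q \<and> \<not> P dvd d q y)
      \<or> (\<not> P dvd d z y \<and> \<not> P dvd d y q \<and> \<not> P dvd d q z)"
    by blast
  then show False
  proof (elim disjE conjE)
    assume "\<not> P dvd d y z" "\<not> P dvd d z q" "\<not> P dvd d q y"
    then show False
      using nonzero_triangle_three_classes[where d = d and y = y and z = z and q = q, OF assms(1)]
        bad(1,3,6) by blast
  next
    assume "\<not> P dvd d z y" "\<not> P dvd d y q" "\<not> P dvd d q z"
    then show False
      using nonzero_triangle_three_classes[where d = d and y = z and z = y and q = q, OF assms(1)]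
        bad(2,4,5) by blast
  qed
qed

section \<open>Growing the residues of paths\<close>

lemma card_path_residues_extend:
  fixes P :: int
  assumes "prime P" "path_residues P w W u x \<noteq> {}"
    and "distinct [e, a, b]" "W \<inter> {e, a, b} = {}"
    and "has_three_classes P (arrival_weights (\<lambda>s t. w s t + w x s - w x t) e a b)"
  shows "min P (int (card (path_residues P w W u x)) + 2)
    \<le> int (card (path_residues P w (W \<union> {e, a, b}) u e))"
proof -
  define d where "d = (\<lambda>s t. w s t + w x s - w x t)"
  define R where "R = {path_weight w (x # s) mod P | s. simple_path {e, a, b} (hd s) e s}"
  have "P > 0"
    using assms(1) prime_gt_0_int by blast
  have arrival_in_R: "(g + w x e) mod P \<in> R" if "g \<in> arrival_weights d e a b" for g
  proof -
    obtain s where s: "s \<in> {[e], [a, e], [b, e], [a, b, e], [b, a, e]}" and g: "g = path_weight d s"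
      using \<open>g \<in> arrival_weights d e a b\<close> unfolding arrival_weights_def by blast
    have "simple_path {e, a, b} (hd s) e s"
      using s assms(3) unfolding simple_path_def by auto
    moreover have "path_weight w (x # s) = g + w x e"
      using s unfolding g d_def by (auto simp: path_weight_potential_shift path_weight_Cons)
    ultimately show ?thesis
      unfolding R_def by (auto intro!: exI[of _ s])
  qed
  obtain g1 g2 g3 where g: "g1 \<in> arrival_weights d e a b" "g2 \<in> arrival_weights d e a b"
      "g3 \<in> arrival_weights d e a b"
    and distinct: "\<not> P dvd (g1 - g2)" "\<not> P dvd (g2 - g3)" "\<not> P dvd (g1 - g3)"
    using assms(5) unfolding has_three_classes_def d_def by blast
  define A where "A = {(g1 + w x e) mod P, (g2 + w x e) mod P, (g3 + w x e) mod P}"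
  have "card A = 3"
    using distinct unfolding A_def by (simp add: mod_eq_dvd_iff)
  have "A \<subseteq> R"
    unfolding A_def using g arrival_in_R by blast
  have "A \<subseteq> {0..<P}" "A \<noteq> {}"
    unfolding A_def using \<open>P > 0\<close> by auto
  then have "min P (int (card (path_residues P w W u x)) + int (card A) - 1)
      \<le> int (card (sumset_mod P (path_residues P w W u x) A))"
    by (rule cauchy_davenport[OF assms(1) path_residues_subset[OF \<open>P > 0\<close>] _ assms(2)])
  also have "card (sumset_mod P (path_residues P w W u x) A)
      \<le> card (path_residues P w (W \<union> {e, a, b}) u e)"
  proof (rule card_mono)
    show "finite (path_residues P w (W \<union> {e, a, b}) u e)"
      by (rule finite_subset[OF path_residues_subset[OF \<open>P > 0\<close>]]) simp
    show "sumset_mod P (path_residues P w W u x) A \<subseteq> path_residues P w (W \<union> {e, a, b}) u e"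
      using sumset_mod_mono[OF order.refl \<open>A \<subseteq> R\<close>] path_residues_concat[OF assms(4)]
      unfolding R_def by (rule order.trans)
  qed
  finally show ?thesis
    using \<open>card A = 3\<close> by simp
qed

lemma card_path_residues_round:
  assumes "prime p" "odd p" and zsf: "zero_sum_free_Zp p n w" and "m + 3 \<le> n"
    and nonempty: "path_residues (int p) w {..<m} 0 x \<noteq> {}"
  shows "\<exists>e \<ge> m. e < m + 3 \<and>
    min (int p) (int (card (path_residues (int p) w {..<m} 0 x)) + 2)
      \<le> int (card (path_residues (int p) w {..<m + 3} 0 e))"
proof -
  define d where "d = (\<lambda>s t. w s t + w x s - w x t)"
  have extend: ?thesis if three: "has_three_classes (int p) (arrival_weights d e a b)"
    and vertices: "{e, a, b} = {m, m + 1, m + 2}" "distinct [e, a, b]" for e a b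
  proof (intro exI[of _ e] conjI)
    show "m \<le> e" "e < m + 3"
      using insertI1[of e "{a, b}"] unfolding vertices(1) by auto
    have "prime (int p)"
      using assms(1) by simp
    moreover have "{..<m} \<inter> {e, a, b} = {}"
      unfolding vertices(1) by auto
    moreover have "{..<m} \<union> {e, a, b} = {..<m + 3}"
      unfolding vertices(1) by auto
    ultimately show "min (int p) (int (card (path_residues (int p) w {..<m} 0 x)) + 2)
        \<le> int (card (path_residues (int p) w {..<m + 3} 0 e))"
      using card_path_residues_extend[OF _ nonempty vertices(2) _ three[unfolded d_def]] by simp
  qed
  have two_cycle: "\<not> int p dvd (d s t + d t s)" if "s \<noteq> t" "s < m + 3" "t < m + 3" for s t
    using zero_sum_free_two_cycle[OF zsf that(1)] that \<open>m + 3 \<le> n\<close> unfolding d_def by simp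
  have "odd (int p)"
    using assms(2) by simp
  moreover have "\<not> int p dvd (d m (m + 1) + d (m + 1) m)" "\<not> int p dvd (d m (m + 2) + d (m + 2) m)"
    "\<not> int p dvd (d (m + 1) (m + 2) + d (m + 2) (m + 1))"
    by (simp_all add: two_cycle)
  ultimately have "has_three_classes (int p) (arrival_weights d (m + 2) m (m + 1))
      \<or> has_three_classes (int p) (arrival_weights d m (m + 1) (m + 2))
      \<or> has_three_classes (int p) (arrival_weights d (m + 1) m (m + 2))"
    by (rule three_classes_vertex[where d = d and y = m and z = "m + 1" and q = "m + 2"])
  then show ?thesis
  proof (elim disjE)
    assume "has_three_classes (int p) (arrival_weights d (m + 2) m (m + 1))"
    then show ?thesis
      by (rule extend) auto
  next
    assume "has_three_classes (int p) (arrival_weights d m (m + 1) (m + 2))"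
    then show ?thesis
      by (rule extend) auto
  next
    assume "has_three_classes (int p) (arrival_weights d (m + 1) m (m + 2))"
    then show ?thesis
      by (rule extend) auto
  qed
qed

lemma card_path_residues_growth:
  assumes "prime p" "odd p" and zsf: "zero_sum_free_Zp p n w" and "1 + 3 * k \<le> n"
  shows "\<exists>x < 1 + 3 * k. (0 < k \<longrightarrow> x \<noteq> 0) \<and>
    min (int p) (2 * int k + 1) \<le> int (card (path_residues (int p) w {..<1 + 3 * k} 0 x))"
  using \<open>1 + 3 * k \<le> n\<close>
proof (induction k)
  case 0
  have "simple_path {..<1} 0 0 [0::nat]"
    unfolding simple_path_def by simp
  then have "0 \<in> path_residues (int p) w {..<1} 0 0"
    unfolding path_residues_def by force
  moreover have "finite (path_residues (int p) w {..<1} 0 0)"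
    using assms(1) prime_gt_0_nat by (intro finite_subset[OF path_residues_subset]) auto
  ultimately have "1 \<le> card (path_residues (int p) w {..<1} 0 0)"
    by (auto simp: Suc_le_eq card_gt_0_iff)
  then show ?case
    by auto
next
  case (Suc k)
  then obtain x where card_x: "min (int p) (2 * int k + 1)
      \<le> int (card (path_residues (int p) w {..<1 + 3 * k} 0 x))"
    by auto
  moreover have "p \<ge> 1"
    using assms(1) prime_ge_1_nat by blast
  ultimately have "path_residues (int p) w {..<1 + 3 * k} 0 x \<noteq> {}"
    by auto
  then obtain e where "1 + 3 * k \<le> e" "e < 1 + 3 * Suc k"
    and "min (int p) (int (card (path_residues (int p) w {..<1 + 3 * k} 0 x)) + 2)
      \<le> int (card (path_residues (int p) w {..<1 + 3 * Suc k} 0 e))"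
    using card_path_residues_round[OF assms(1,2) zsf, of "1 + 3 * k"] Suc.prems by auto
  then show ?case
    using card_x by (intro exI[of _ e]) (auto simp: min_def split: if_splits)
qed

theorem theorem2:
  fixes p :: nat
  assumes "prime p" and "3 \<le> p"
  shows "n_Zp p \<le> (3 * p - 1) div 2"
proof -
  have "odd p"
    using assms prime_odd_nat by simp
  then obtain K where p: "p = 2 * K + 1"
    using oddE by blast
  have "\<not> zero_sum_free_Zp p (1 + 3 * K) w" for w
  proof
    assume zsf: "zero_sum_free_Zp p (1 + 3 * K) w"
    obtain x where "x \<noteq> 0"
      and "int p \<le> int (card (path_residues (int p) w {..<1 + 3 * K} 0 x))"
      using card_path_residues_growth[OF assms(1) \<open>odd p\<close> zsf order.refl] assms(2) p by auto
    then have "path_residues (int p) w {..<1 + 3 * K} 0 x = {0..<int p}"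
      using residues_eq_if_card_ge[OF path_residues_subset, where P = "int p"] assms(2) by simp
    moreover have "(- w x 0) mod int p \<notin> path_residues (int p) w {..<1 + 3 * K} 0 x"
      using closing_residue_notin_path_residues[OF zsf] \<open>x \<noteq> 0\<close> by simp
    ultimately show False
      using assms(2) by simp
  qed
  then have "n_Zp p \<le> 1 + 3 * K"
    unfolding n_Zp_def using p assms(2) by (intro Least_le) simp
  then show ?thesis
    using p by simp
qed

end
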